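(* Let $U\colon[0,1]^2\to[0,1]$ be a uninorm with neutral element $e\in(0,1)$, $U\in\mathcal U$, and let $c\in[0,1]$ be an idempotent element of $U$. If $a,b$ are idempotent elements of $U$ such that $U(x,x)\ne x$ for all $x\in(a,b)$, then either $U(c,x)=\min(x,c)$ for all $x\in(a,b)$, or $U(c,x)=\max(x,c)$ for all $x\in(a,b)$. Moreover, if $U$ on $[a,b]^2$ is a nilpotent t-norm (resp. nilpotent t-conorm), then either $U(c,x)=\min(x,c)$ for all $x\in[a,b)$ (resp. $x\in(a,b]$) or $U(c,x)=\max(x,c)$ for all $x\in[a,b)$ (resp. $x\in(a,b]$).
   Context: A uninorm is a commutative, associative binary operation on $[0,1]$, non-decreasing in each variable, with a neutral element $e$. Underlying t-norm $T_U(x,y)=U(ex,ey)/e$, underlying t-conorm $C_U(x,y)=(U(e+(1-e)x,e+(1-e)y)-e)/(1-e)$; $\mathcal U$ is the class of uninorms for which both are continuous. An idempotent element is $x$ with $U(x,x)=x$. "$U$ on $[a,b]^2$ is a nilpotent t-norm (t-conorm)" means that the restriction of $U$ to $[a,b]^2$, transported to $[0,1]^2$ by the increasing linear bijection $[a,b]\to[0,1]$, is a nilpotent t-norm (t-conorm), i.e. a continuous t-norm with only idempotents $0,1$ and $T(x,y)=0$ for some $x,y\in(0,1)$ (resp. a continuous t-conorm with only idempotents $0,1$ and $S(x,y)=1$ for some $x,y\in(0,1)$). *)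

theory Defs
  imports "HOL-Analysis.Analysis"
begin

text \<open>Binary operations on [0,1] are modelled as functions real => real => real;
  only their values on the unit square matter.\<close>

definition uninorm :: "(real \<Rightarrow> real \<Rightarrow> real) \<Rightarrow> real \<Rightarrow> bool" where
  "uninorm U e \<longleftrightarrow> e \<in> {0..1} \<and>
     (\<forall>x\<in>{0..1}. \<forall>y\<in>{0..1}. U x y \<in> {0..1}) \<and>
     (\<forall>x\<in>{0..1}. \<forall>y\<in>{0..1}. U x y = U y x) \<and>
     (\<forall>x\<in>{0..1}. \<forall>y\<in>{0..1}. \<forall>z\<in>{0..1}. U (U x y) z = U x (U y z)) \<and>
     (\<forall>x\<in>{0..1}. \<forall>x'\<in>{0..1}. \<forall>y\<in>{0..1}. x \<le> x' \<longrightarrow> U x y \<le> U x' y) \<and>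
     (\<forall>x\<in>{0..1}. U e x = x)"

definition underlying_tnorm :: "(real \<Rightarrow> real \<Rightarrow> real) \<Rightarrow> real \<Rightarrow> real \<Rightarrow> real \<Rightarrow> real" where
  "underlying_tnorm U e x y = U (e * x) (e * y) / e"

definition underlying_tconorm :: "(real \<Rightarrow> real \<Rightarrow> real) \<Rightarrow> real \<Rightarrow> real \<Rightarrow> real \<Rightarrow> real" where
  "underlying_tconorm U e x y = (U (e + (1 - e) * x) (e + (1 - e) * y) - e) / (1 - e)"

definition class_U :: "(real \<Rightarrow> real \<Rightarrow> real) \<Rightarrow> real \<Rightarrow> bool" where
  "class_U U e \<longleftrightarrow> uninorm U e \<and>
     continuous_on ({0..1} \<times> {0..1}) (\<lambda>(x, y). underlying_tnorm U e x y) \<and>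
     continuous_on ({0..1} \<times> {0..1}) (\<lambda>(x, y). underlying_tconorm U e x y)"

definition idempotent_elem :: "(real \<Rightarrow> real \<Rightarrow> real) \<Rightarrow> real \<Rightarrow> bool" where
  "idempotent_elem U x \<longleftrightarrow> x \<in> {0..1} \<and> U x x = x"

definition tnorm :: "(real \<Rightarrow> real \<Rightarrow> real) \<Rightarrow> bool" where
  "tnorm T \<longleftrightarrow> uninorm T 1"

definition tconorm :: "(real \<Rightarrow> real \<Rightarrow> real) \<Rightarrow> bool" where
  "tconorm S \<longleftrightarrow> uninorm S 0"

definition nilpotent_tnorm :: "(real \<Rightarrow> real \<Rightarrow> real) \<Rightarrow> bool" where
  "nilpotent_tnorm T \<longleftrightarrow> tnorm T \<and>
     continuous_on ({0..1} \<times> {0..1}) (\<lambda>(x, y). T x y) \<and>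
     (\<forall>x\<in>{0..1}. T x x = x \<longrightarrow> x = 0 \<or> x = 1) \<and>
     (\<exists>x\<in>{0<..<1}. \<exists>y\<in>{0<..<1}. T x y = 0)"

definition nilpotent_tconorm :: "(real \<Rightarrow> real \<Rightarrow> real) \<Rightarrow> bool" where
  "nilpotent_tconorm S \<longleftrightarrow> tconorm S \<and>
     continuous_on ({0..1} \<times> {0..1}) (\<lambda>(x, y). S x y) \<and>
     (\<forall>x\<in>{0..1}. S x x = x \<longrightarrow> x = 0 \<or> x = 1) \<and>
     (\<exists>x\<in>{0<..<1}. \<exists>y\<in>{0<..<1}. S x y = 1)"

text \<open>Restriction of U to [a,b]^2 transported to [0,1]^2 by the increasing linear bijection.\<close>
definition transport :: "(real \<Rightarrow> real \<Rightarrow> real) \<Rightarrow> real \<Rightarrow> real \<Rightarrow> real \<Rightarrow> real \<Rightarrow> real" where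
  "transport U a b x y = (U (a + (b - a) * x) (a + (b - a) * y) - a) / (b - a)"

definition nilpotent_tnorm_on :: "(real \<Rightarrow> real \<Rightarrow> real) \<Rightarrow> real \<Rightarrow> real \<Rightarrow> bool" where
  "nilpotent_tnorm_on U a b \<longleftrightarrow> a < b \<and> nilpotent_tnorm (transport U a b)"

definition nilpotent_tconorm_on :: "(real \<Rightarrow> real \<Rightarrow> real) \<Rightarrow> real \<Rightarrow> real \<Rightarrow> bool" where
  "nilpotent_tconorm_on U a b \<longleftrightarrow> a < b \<and> nilpotent_tconorm (transport U a b)"

end

theory Submission
  imports Defs
begin

text \<open>An idempotent \<open>c\<close> acts on an idempotent-free interval \<open>(a,b)\<close> either as the constant
  \<open>c\<close> or as the identity. Both lie on one side of the neutral element; when \<open>c\<close> is on the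
  same side, \<open>U c\<close> is \<open>min\<close> resp. \<open>max\<close> there, as for idempotents of a continuous t-norm
  resp. t-conorm. Otherwise a switch between the two behaviours would, by continuity of the
  diagonal, produce an idempotent inside \<open>(a,b)\<close>. Nilpotency supplies \<open>X, Y \<in> (a,b)\<close> with
  \<open>U X Y = a\<close> (resp. \<open>b\<close>), and \<open>U c (U X Y) = U (U c X) Y\<close> carries the dichotomy to that
  endpoint. Since \<open>c \<notin> (a,b)\<close>, constant/identity is the same as \<open>min\<close>/\<open>max\<close>.\<close>

lemma continuous_on_le_at_left:
  fixes f :: "real \<Rightarrow> real"
  assumes "continuous_on S f" "t \<in> interior S" "p < t" "\<And>x. x \<in> {p<..<t} \<Longrightarrow> f x \<le> M"
  shows "f t \<le> M"
proof (rule tendsto_upperbound)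
  show "(f \<longlongrightarrow> f t) (at_left t)"
    using continuous_on_interior[OF assms(1,2)] by (simp add: continuous_at filterlim_at_split)
  show "eventually (\<lambda>x. f x \<le> M) (at_left t)"
    using eventually_at_left_real[OF assms(3)] by (rule eventually_mono) (rule assms(4))
qed simp

locale uninorm_in_U =
  fixes U :: "real \<Rightarrow> real \<Rightarrow> real" and e :: real
  assumes uninorm: "uninorm U e" and e_pos: "0 < e" and e_less_1: "e < 1"
    and continuous_lower: "continuous_on ({0..e} \<times> {0..e}) (\<lambda>(x, y). U x y)"
    and continuous_upper: "continuous_on ({e..1} \<times> {e..1}) (\<lambda>(x, y). U x y)"
begin

lemma closed: "x \<in> {0..1} \<Longrightarrow> y \<in> {0..1} \<Longrightarrow> U x y \<in> {0..1}"
  using uninorm unfolding uninorm_def by blast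

lemma commute: "x \<in> {0..1} \<Longrightarrow> y \<in> {0..1} \<Longrightarrow> U x y = U y x"
  using uninorm unfolding uninorm_def by blast

lemma assoc:
  "x \<in> {0..1} \<Longrightarrow> y \<in> {0..1} \<Longrightarrow> z \<in> {0..1} \<Longrightarrow> U (U x y) z = U x (U y z)"
  using uninorm unfolding uninorm_def by blast

lemma mono_left:
  "x \<le> x' \<Longrightarrow> x \<in> {0..1} \<Longrightarrow> x' \<in> {0..1} \<Longrightarrow> y \<in> {0..1} \<Longrightarrow> U x y \<le> U x' y"
  using uninorm unfolding uninorm_def by blast

lemma mono_right:
  "y \<le> y' \<Longrightarrow> x \<in> {0..1} \<Longrightarrow> y \<in> {0..1} \<Longrightarrow> y' \<in> {0..1} \<Longrightarrow> U x y \<le> U x y'"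
  using mono_left[of y y' x] commute by simp

lemma neutral_left: "x \<in> {0..1} \<Longrightarrow> U e x = x"
  using uninorm unfolding uninorm_def by blast

lemma neutral_right: "x \<in> {0..1} \<Longrightarrow> U x e = x"
  using neutral_left[of x] commute[of x e] e_pos e_less_1 by simp

lemma continuous_on_section_lower:
  assumes "c \<in> {0..e}" shows "continuous_on {0..e} (U c)"
proof -
  have "continuous_on {0..e} (\<lambda>w. (\<lambda>(x, y). U x y) (c, w))"
    by (rule continuous_on_compose2[OF continuous_lower])
      (use assms in \<open>auto intro!: continuous_intros\<close>)
  then show ?thesis by simp
qed

lemma continuous_on_section_upper:
  assumes "c \<in> {e..1}" shows "continuous_on {e..1} (U c)"
proof -
  have "continuous_on {e..1} (\<lambda>w. (\<lambda>(x, y). U x y) (c, w))"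
    by (rule continuous_on_compose2[OF continuous_upper])
      (use assms in \<open>auto intro!: continuous_intros\<close>)
  then show ?thesis by simp
qed

lemma continuous_on_diagonal_upper: "continuous_on {e..1} (\<lambda>x. U x x)"
proof -
  have "continuous_on {e..1} (\<lambda>w. (\<lambda>(x, y). U x y) (w, w))"
    by (rule continuous_on_compose2[OF continuous_upper]) (auto intro!: continuous_intros)
  then show ?thesis by simp
qed

text \<open>The dual \<open>x, y \<mapsto> 1 - U (1 - x) (1 - y)\<close> swaps the two halves of the unit square,
  so every statement about the part below \<open>e\<close> has a mirror image above \<open>e\<close>.\<close>

lemma dual: "uninorm_in_U (\<lambda>x y. 1 - U (1 - x) (1 - y)) (1 - e)"
proof -
  have "uninorm (\<lambda>x y. 1 - U (1 - x) (1 - y)) (1 - e)"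
    unfolding uninorm_def
  proof (intro conjI ballI impI)
    fix x y z x' :: real
    assume x: "x \<in> {0..1}" and y: "y \<in> {0..1}" and z: "z \<in> {0..1}" and x': "x' \<in> {0..1}"
    show "1 - U (1 - x) (1 - y) \<in> {0..1}" using closed[of "1 - x" "1 - y"] x y by auto
    show "1 - U (1 - x) (1 - y) = 1 - U (1 - y) (1 - x)" using commute[of "1 - x" "1 - y"] x y by auto
    show "1 - U (1 - (1 - U (1 - x) (1 - y))) (1 - z) = 1 - U (1 - x) (1 - (1 - U (1 - y) (1 - z)))"
      using assoc[of "1 - x" "1 - y" "1 - z"] x y z by auto
    show "1 - U (1 - x) (1 - y) \<le> 1 - U (1 - x') (1 - y)" if "x \<le> x'"
      using mono_left[of "1 - x'" "1 - x" "1 - y"] that x x' y by auto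
    show "1 - U (1 - (1 - e)) (1 - x) = x" using neutral_left[of "1 - x"] x by auto
  qed (use e_pos e_less_1 in auto)
  moreover have "continuous_on ({0..1 - e} \<times> {0..1 - e}) (\<lambda>(x, y). 1 - U (1 - x) (1 - y))"
  proof -
    have "continuous_on ({0..1 - e} \<times> {0..1 - e})
        (\<lambda>z. 1 - (\<lambda>(x, y). U x y) (1 - fst z, 1 - snd z))"
      by (intro continuous_intros continuous_on_compose2[OF continuous_upper]) auto
    then show ?thesis by (simp add: case_prod_unfold)
  qed
  moreover have "continuous_on ({1 - e..1} \<times> {1 - e..1}) (\<lambda>(x, y). 1 - U (1 - x) (1 - y))"
  proof -
    have "continuous_on ({1 - e..1} \<times> {1 - e..1})
        (\<lambda>z. 1 - (\<lambda>(x, y). U x y) (1 - fst z, 1 - snd z))"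
      by (intro continuous_intros continuous_on_compose2[OF continuous_lower]) auto
    then show ?thesis by (simp add: case_prod_unfold)
  qed
  ultimately show ?thesis
    using e_pos e_less_1 by unfold_locales auto
qed

lemma idempotent_lower_eq_min:
  assumes c: "c \<in> {0..e}" "U c c = c" and z: "z \<in> {0..e}"
  shows "U c z = min c z"
proof (cases "c \<le> z")
  case True
  have "U c c \<le> U c z" using mono_right[of c z c] c z e_less_1 True by auto
  moreover have "U c z \<le> U c e" using mono_right[of z e c] c z e_less_1 by auto
  ultimately show ?thesis using True c neutral_right[of c] e_less_1 by auto
next
  case False
  have "U c 0 \<le> U e 0" using mono_left[of c e 0] c e_less_1 by auto
  then have "U c 0 \<le> z" using neutral_left[of 0] z by auto
  moreover have "z \<le> U c c" using c False by auto
  moreover have "continuous_on {0..c} (U c)"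
    using continuous_on_subset[OF continuous_on_section_lower] c by auto
  ultimately obtain w where w: "0 \<le> w" "w \<le> c" "U c w = z"
    using IVT'[of "U c" 0 z c] c by auto
  have "U c z = U (U c c) w" using assoc[of c c w] w c e_less_1 by auto
  then show ?thesis using c w False by simp
qed

lemma idempotent_upper_eq_max:
  assumes c: "c \<in> {e..1}" "U c c = c" and z: "z \<in> {e..1}"
  shows "U c z = max c z"
proof -
  interpret dual: uninorm_in_U "\<lambda>x y. 1 - U (1 - x) (1 - y)" "1 - e" by (rule dual)
  have "1 - U c z = min (1 - c) (1 - z)"
    using dual.idempotent_lower_eq_min[of "1 - c" "1 - z"] c z by auto
  then show ?thesis by linarith
qed

text \<open>Above \<open>e\<close> the section \<open>U v\<close> maps \<open>[e,1]\<close> onto \<open>[v,1]\<close> by continuity, so every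
  \<open>y \<ge> v\<close> is a product \<open>U v t\<close>, and a fixed point \<open>v\<close> of \<open>U c\<close> propagates to \<open>y\<close>.\<close>

lemma fixed_point_upward_closed:
  assumes c: "c \<in> {0..1}" and v: "v \<in> {e..1}" "U c v = v" and y: "v \<le> y" "y \<le> 1"
  shows "U c y = y"
proof -
  have "U e 1 \<le> U v 1" using mono_left[of e v 1] v e_pos by auto
  then have "y \<le> U v 1" using neutral_left[of 1] y by auto
  moreover have "U v e \<le> y" using neutral_right v y e_pos by auto
  ultimately obtain t where t: "e \<le> t" "t \<le> 1" "U v t = y"
    using IVT'[of "U v" e y 1] continuous_on_section_upper[of v] v e_less_1 by auto
  have "U c y = U (U c v) t" using assoc[of c v t] t c v e_pos by auto
  then show ?thesis using v t by simp
qed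

lemma lower_idempotent_const_or_id_pointwise:
  assumes c: "c \<in> {0..e}" "U c c = c" and y: "y \<in> {e..1}"
  shows "U c y = c \<or> U c y = y"
proof -
  define v where "v = U c y"
  have "U c e \<le> v" unfolding v_def using mono_right[of e y c] c y e_less_1 by auto
  then have cv: "c \<le> v" using neutral_right c e_less_1 by auto
  have "v \<le> U e y" unfolding v_def using mono_left[of c e y] c y e_less_1 by auto
  then have vy: "v \<le> y" using neutral_left y e_pos by auto
  have v_fixed: "U c v = v" unfolding v_def using assoc[of c c y] c y e_less_1 e_pos by auto
  show ?thesis
  proof (cases "e \<le> v")
    case True
    then show ?thesis using fixed_point_upward_closed[of c v y] c v_fixed vy y unfolding v_def by auto
  next
    case False
    then have "U c v = min c v" using idempotent_lower_eq_min[of c v] c cv by auto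
    then show ?thesis using v_fixed cv unfolding v_def by auto
  qed
qed

text \<open>If \<open>U c\<close> took both values \<open>c\<close> and \<open>x\<close> on the gap, let \<open>t\<close> be the infimum of the
  fixed points of \<open>U c\<close> above \<open>e\<close>. Every \<open>x\<close> of the gap below \<open>t\<close> has \<open>U c x = c\<close>, hence
  \<open>U c (U x x) = c\<close>, so \<open>U x x\<close> is no fixed point and \<open>U x x \<le> t\<close>; letting \<open>x \<rightarrow> t\<close>
  makes \<open>t\<close> an idempotent inside the gap.\<close>

lemma lower_idempotent_const_or_id_on_upper_gap:
  assumes c: "c \<in> {0..e}" "U c c = c" and ab: "e \<le> a" "b \<le> 1"
    and gap: "\<forall>x\<in>{a<..<b}. U x x \<noteq> x"
  shows "(\<forall>x\<in>{a<..<b}. U c x = c) \<or> (\<forall>x\<in>{a<..<b}. U c x = x)"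
proof (rule ccontr)
  assume "\<not> ?thesis"
  then obtain p q where p: "p \<in> {a<..<b}" "U c p \<noteq> p" and q: "q \<in> {a<..<b}" "U c q \<noteq> c"
    by auto
  have below_id: "x \<le> U x x" if "x \<in> {e..1}" for x
    using mono_left[of e x x] neutral_left[of x] that e_pos by auto
  define A where "A = {x \<in> {e..1}. U c x = x}"
  define t where "t = Inf A"
  have "q \<in> A" using lower_idempotent_const_or_id_pointwise[of c q] c q ab unfolding A_def by auto
  moreover have A_bdd: "bdd_below A" unfolding A_def by (rule bdd_belowI[of _ e]) auto
  ultimately have t_le_q: "t \<le> q" unfolding t_def by (rule cInf_lower)
  have fixed_above: "U c y = y" if y: "t < y" "y \<le> 1" for y
  proof -
    obtain v where "v \<in> A" "v < y"
      using cInf_less_iff[of A y] \<open>q \<in> A\<close> A_bdd y unfolding t_def by auto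
    then show ?thesis using fixed_point_upward_closed[of c v y] c y unfolding A_def by auto
  qed
  have square_le_t: "U x x \<le> t" if x: "x \<in> {a<..<b}" "U c x = c" for x
  proof (rule ccontr)
    assume "\<not> U x x \<le> t"
    moreover have "U x x \<le> 1" using closed[of x x] x ab e_pos by auto
    ultimately have "U c (U x x) = U x x" using fixed_above by auto
    moreover have "U c (U x x) = c" using assoc[of c x x] x c ab e_less_1 by auto
    moreover have "c < U x x" using below_id[of x] x c ab by auto
    ultimately show False by simp
  qed
  have "U c p = c" using lower_idempotent_const_or_id_pointwise[of c p] c p ab by auto
  then have "p < t" using square_le_t[of p] below_id[of p] gap p ab by fastforce
  have "U x x \<le> t" if x: "x \<in> {p<..<t}" for x
  proof -
    have x_gap: "x \<in> {a<..<b}" using x p t_le_q q by auto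
    have "x \<notin> A" using x cInf_lower[OF _ A_bdd, of x] unfolding t_def by auto
    then have "U c x = c"
      using lower_idempotent_const_or_id_pointwise[of c x] c x_gap ab unfolding A_def by auto
    then show ?thesis using square_le_t x_gap by blast
  qed
  then have "U t t \<le> t"
    using continuous_on_le_at_left[OF continuous_on_diagonal_upper] \<open>p < t\<close> p t_le_q q ab
    by auto
  moreover have "t \<in> {a<..<b}" using \<open>p < t\<close> p t_le_q q by auto
  ultimately show False using below_id[of t] gap ab by fastforce
qed

lemma idempotent_const_or_id_on_upper_gap:
  assumes c: "c \<in> {0..1}" "U c c = c" and ab: "e \<le> a" "b \<le> 1"
    and gap: "\<forall>x\<in>{a<..<b}. U x x \<noteq> x"
  shows "(\<forall>x\<in>{a<..<b}. U c x = c) \<or> (\<forall>x\<in>{a<..<b}. U c x = x)"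
proof (cases "c \<le> e")
  case True
  then show ?thesis using lower_idempotent_const_or_id_on_upper_gap c ab gap by auto
next
  case False
  then have "U c x = max c x" if "x \<in> {a<..<b}" for x
    using idempotent_upper_eq_max[of c x] that c ab by auto
  moreover have "c \<le> a \<or> b \<le> c" using gap c by (meson greaterThanLessThan_iff not_le)
  ultimately show ?thesis by (smt (verit) greaterThanLessThan_iff max_def)
qed

lemma idempotent_const_or_id_on_gap:
  assumes c: "c \<in> {0..1}" "U c c = c" and ab: "0 \<le> a" "b \<le> 1"
    and gap: "\<forall>x\<in>{a<..<b}. U x x \<noteq> x"
  shows "(\<forall>x\<in>{a<..<b}. U c x = c) \<or> (\<forall>x\<in>{a<..<b}. U c x = x)"
proof -
  have "e \<le> a \<or> b \<le> e" using gap neutral_left[of e] e_pos e_less_1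
    by (meson atLeastAtMost_iff greaterThanLessThan_iff less_eq_real_def not_le)
  then show ?thesis
  proof
    assume "e \<le> a"
    then show ?thesis using idempotent_const_or_id_on_upper_gap c ab gap by blast
  next
    assume "b \<le> e"
    interpret dual: uninorm_in_U "\<lambda>x y. 1 - U (1 - x) (1 - y)" "1 - e" by (rule dual)
    have "\<forall>x\<in>{1 - b<..<1 - a}. 1 - U (1 - x) (1 - x) \<noteq> x"
    proof
      fix x assume "x \<in> {1 - b<..<1 - a}"
      then have "1 - x \<in> {a<..<b}" by auto
      then show "1 - U (1 - x) (1 - x) \<noteq> x" using gap by fastforce
    qed
    then have "(\<forall>x\<in>{1 - b<..<1 - a}. 1 - U c (1 - x) = 1 - c)
        \<or> (\<forall>x\<in>{1 - b<..<1 - a}. 1 - U c (1 - x) = x)"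
      using dual.idempotent_const_or_id_on_upper_gap[of "1 - c" "1 - b" "1 - a"] c \<open>b \<le> e\<close> ab
      by auto
    moreover have mirror: "1 - x \<in> {1 - b<..<1 - a}" if "x \<in> {a<..<b}" for x
      using that by auto
    ultimately show ?thesis
    proof (elim disjE)
      assume h: "\<forall>x\<in>{1 - b<..<1 - a}. 1 - U c (1 - x) = 1 - c"
      show ?thesis using h[rule_format, OF mirror] by simp
    next
      assume h: "\<forall>x\<in>{1 - b<..<1 - a}. 1 - U c (1 - x) = x"
      show ?thesis using h[rule_format, OF mirror] by simp
    qed
  qed
qed

end

lemma class_U_imp_uninorm_in_U:
  assumes "class_U U e" "0 < e" "e < 1"
  shows "uninorm_in_U U e"
proof -
  have T: "continuous_on ({0..1} \<times> {0..1}) (\<lambda>(x, y). underlying_tnorm U e x y)"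
    and S: "continuous_on ({0..1} \<times> {0..1}) (\<lambda>(x, y). underlying_tconorm U e x y)"
    using assms(1) unfolding class_U_def by auto
  have "continuous_on ({0..e} \<times> {0..e})
      (\<lambda>z. e * (\<lambda>(x, y). underlying_tnorm U e x y) (fst z / e, snd z / e))"
    by (intro continuous_intros continuous_on_compose2[OF T])
      (use assms in \<open>auto simp: field_simps\<close>)
  then have "continuous_on ({0..e} \<times> {0..e}) (\<lambda>(x, y). U x y)"
    by (rule continuous_on_cong[OF refl, THEN iffD1, rotated])
      (use assms in \<open>auto simp: underlying_tnorm_def split: prod.splits\<close>)
  moreover have "continuous_on ({e..1} \<times> {e..1}) (\<lambda>z. e + (1 - e) *
      (\<lambda>(x, y). underlying_tconorm U e x y) ((fst z - e) / (1 - e), (snd z - e) / (1 - e)))"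
    by (intro continuous_intros continuous_on_compose2[OF S])
      (use assms in \<open>auto simp: field_simps\<close>)
  then have "continuous_on ({e..1} \<times> {e..1}) (\<lambda>(x, y). U x y)"
    by (rule continuous_on_cong[OF refl, THEN iffD1, rotated])
      (use assms in \<open>auto simp: underlying_tconorm_def split: prod.splits\<close>)
  ultimately show ?thesis
    using assms unfolding class_U_def by unfold_locales auto
qed

lemma uninorm_section_const_or_id_insert_product:
  assumes "uninorm U e" "c \<in> {0..1}" "S \<subseteq> {0..1}" "X \<in> S" "Y \<in> S"
    and "(\<forall>x\<in>S. U c x = c) \<or> (\<forall>x\<in>S. U c x = x)"
  shows "(\<forall>x\<in>insert (U X Y) S. U c x = c) \<or> (\<forall>x\<in>insert (U X Y) S. U c x = x)"
proof -
  have "\<forall>x\<in>{0..1}. \<forall>y\<in>{0..1}. \<forall>z\<in>{0..1}. U (U x y) z = U x (U y z)"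
    using assms(1) unfolding uninorm_def by blast
  moreover have "X \<in> {0..1}" "Y \<in> {0..1}" using assms(3-5) by auto
  ultimately have "U c (U X Y) = U (U c X) Y" using assms(2) by simp
  then show ?thesis using assms(4-6) by auto
qed

lemma affine_unit_interval_mem:
  fixes a b x :: real
  assumes "a < b" "x \<in> {0<..<1}" shows "a + (b - a) * x \<in> {a<..<b}"
proof -
  have "0 < (b - a) * x" using assms by simp
  moreover have "(b - a) * x < b - a" using mult_strict_left_mono[of x 1 "b - a"] assms by simp
  ultimately show ?thesis by simp
qed

lemma nilpotent_tnorm_on_reaches_bottom:
  assumes "nilpotent_tnorm_on U a b"
  shows "\<exists>X\<in>{a<..<b}. \<exists>Y\<in>{a<..<b}. U X Y = a"
proof -
  obtain x y where xy: "x \<in> {0<..<1}" "y \<in> {0<..<1}" "transport U a b x y = 0" and "a < b"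
    using assms unfolding nilpotent_tnorm_on_def nilpotent_tnorm_def by auto
  then have "U (a + (b - a) * x) (a + (b - a) * y) = a"
    unfolding transport_def by simp
  then show ?thesis
    using affine_unit_interval_mem[of a b] xy \<open>a < b\<close> by blast
qed

lemma nilpotent_tconorm_on_reaches_top:
  assumes "nilpotent_tconorm_on U a b"
  shows "\<exists>X\<in>{a<..<b}. \<exists>Y\<in>{a<..<b}. U X Y = b"
proof -
  obtain x y where xy: "x \<in> {0<..<1}" "y \<in> {0<..<1}" "transport U a b x y = 1" and "a < b"
    using assms unfolding nilpotent_tconorm_on_def nilpotent_tconorm_def by auto
  then have "U (a + (b - a) * x) (a + (b - a) * y) = b"
    unfolding transport_def by (simp add: divide_eq_1_iff)
  then show ?thesis
    using affine_unit_interval_mem[of a b] xy \<open>a < b\<close> by blast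
qed

lemma const_or_id_imp_min_or_max:
  fixes f :: "real \<Rightarrow> real"
  assumes "(\<forall>x\<in>S. f x = c) \<or> (\<forall>x\<in>S. f x = x)" and "(\<forall>x\<in>S. x \<le> c) \<or> (\<forall>x\<in>S. c \<le> x)"
  shows "(\<forall>x\<in>S. f x = min x c) \<or> (\<forall>x\<in>S. f x = max x c)"
  using assms by (metis max.absorb1 max.absorb2 min.absorb1 min.absorb2)

theorem lemma7:
  fixes U :: "real \<Rightarrow> real \<Rightarrow> real" and e a b c :: real
  assumes "class_U U e" and "0 < e" and "e < 1"
    and "idempotent_elem U c"
    and "idempotent_elem U a" and "idempotent_elem U b"
    and "\<forall>x\<in>{a<..<b}. U x x \<noteq> x"
  shows "((\<forall>x\<in>{a<..<b}. U c x = min x c) \<or> (\<forall>x\<in>{a<..<b}. U c x = max x c))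
     \<and> (nilpotent_tnorm_on U a b \<longrightarrow>
          (\<forall>x\<in>{a..<b}. U c x = min x c) \<or> (\<forall>x\<in>{a..<b}. U c x = max x c))
     \<and> (nilpotent_tconorm_on U a b \<longrightarrow>
          (\<forall>x\<in>{a<..b}. U c x = min x c) \<or> (\<forall>x\<in>{a<..b}. U c x = max x c))"
proof -
  interpret uninorm_in_U U e using class_U_imp_uninorm_in_U assms(1-3) .
  have c: "c \<in> {0..1}" "U c c = c" and ab: "a \<in> {0..1}" "b \<in> {0..1}"
    using assms(4-6) unfolding idempotent_elem_def by auto
  let ?const_or_id = "\<lambda>S. (\<forall>x\<in>S. U c x = c) \<or> (\<forall>x\<in>S. U c x = x)"
  have gap: "?const_or_id {a<..<b}"
    using idempotent_const_or_id_on_gap c ab assms(7) by auto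
  have extend: "?const_or_id (insert (U X Y) {a<..<b})" if "X \<in> {a<..<b}" "Y \<in> {a<..<b}" for X Y
    by (rule uninorm_section_const_or_id_insert_product[OF uninorm c(1) _ that gap]) (use ab in auto)
  have "c \<le> a \<or> b \<le> c" using assms(7) c by (meson greaterThanLessThan_iff not_le)
  then have side: "(\<forall>x\<in>S. x \<le> c) \<or> (\<forall>x\<in>S. c \<le> x)" if "S \<subseteq> {a..b}" for S
    using that by fastforce
  have min_max: "(\<forall>x\<in>S. U c x = min x c) \<or> (\<forall>x\<in>S. U c x = max x c)"
    if "S \<subseteq> {a..b}" "?const_or_id S" for S
    using const_or_id_imp_min_or_max[OF that(2) side[OF that(1)]] .
  have const_or_id_tnorm: "?const_or_id {a..<b}" if nilpotent: "nilpotent_tnorm_on U a b"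
  proof -
    obtain X Y where XY: "X \<in> {a<..<b}" "Y \<in> {a<..<b}" "U X Y = a"
      using nilpotent_tnorm_on_reaches_bottom[OF nilpotent] by blast
    then have "insert a {a<..<b} = {a..<b}" by auto
    then show ?thesis using extend[OF XY(1,2)] XY(3) by simp
  qed
  have const_or_id_tconorm: "?const_or_id {a<..b}" if nilpotent: "nilpotent_tconorm_on U a b"
  proof -
    obtain X Y where XY: "X \<in> {a<..<b}" "Y \<in> {a<..<b}" "U X Y = b"
      using nilpotent_tconorm_on_reaches_top[OF nilpotent] by blast
    then have "insert b {a<..<b} = {a<..b}" by auto
    then show ?thesis using extend[OF XY(1,2)] XY(3) by simp
  qed
  have "{a<..<b} \<subseteq> {a..b}" "{a..<b} \<subseteq> {a..b}" "{a<..b} \<subseteq> {a..b}" by auto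
  then show ?thesis
    using min_max gap const_or_id_tnorm const_or_id_tconorm by (intro conjI impI) simp_all
qed

end
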